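(* Let $\Sigma$ be a non-empty finite or countably infinite alphabet, $p$ a positive Bernoulli distribution on $\Sigma$, $A=(Q,\Sigma,\delta,q_s,F)$ a strongly connected DFA, and $b,\epsilon$ real numbers with $0<b\le1$, $\epsilon>0$. Then $\lim_{n\to\infty}\mu_p(G_n(b,\epsilon))=0$.
   Context: $p:\Sigma\to(0,1]$ with $\sum_ap(a)=1$; $\mu_p(a_1\cdots a_n)=\prod_ip(a_i)$, $\mu_p(W)=\sum_{w\in W}\mu_p(w)$. $A_q$ is $A$ with start state $q$; for $w=w_1\cdots w_n$, $A_q[w]$ is the subsequence of those $w_i$ with $\delta^*(q,w_1\cdots w_{i-1})\in F$; $\#_a(v)$ counts occurrences of $a$ in $v$. Define $G_n(b,\epsilon,q)=\{w\in\Sigma^n: |A_q[w]|>bn\ \text{and}\ \sup_{a\in\Sigma}|\#_a(A_q[w])/|A_q[w]|-p(a)|\ge\epsilon\}$ and $G_n(b,\epsilon)=\bigcup_{q\in Q}G_n(b,\epsilon,q)$. *)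

theory Defs
  imports "HOL-Analysis.Analysis"
begin

definition delta_star :: "('s \<Rightarrow> 'a \<Rightarrow> 's) \<Rightarrow> 's \<Rightarrow> 'a list \<Rightarrow> 's" where
  "delta_star \<delta> q w = foldl \<delta> q w"

definition is_dfa :: "'s set \<Rightarrow> 'a set \<Rightarrow> ('s \<Rightarrow> 'a \<Rightarrow> 's) \<Rightarrow> 's \<Rightarrow> 's set \<Rightarrow> bool" where
  "is_dfa Q Sig \<delta> qs F \<longleftrightarrow> finite Q \<and> Q \<noteq> {} \<and> qs \<in> Q \<and> F \<subseteq> Q \<and>
     (\<forall>q\<in>Q. \<forall>a\<in>Sig. \<delta> q a \<in> Q)"

definition strongly_connected :: "'s set \<Rightarrow> 'a set \<Rightarrow> ('s \<Rightarrow> 'a \<Rightarrow> 's) \<Rightarrow> bool" where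
  "strongly_connected Q Sig \<delta> \<longleftrightarrow>
     (\<forall>q\<in>Q. \<forall>q'\<in>Q. \<exists>w\<in>lists Sig. delta_star \<delta> q w = q')"

text \<open>A_q[w]: the subsequence of letters read while the automaton (started in q) is in F.\<close>
fun selected :: "('s \<Rightarrow> 'a \<Rightarrow> 's) \<Rightarrow> 's set \<Rightarrow> 's \<Rightarrow> 'a list \<Rightarrow> 'a list" where
  "selected \<delta> F q [] = []"
| "selected \<delta> F q (a # w) =
     (if q \<in> F then a # selected \<delta> F (\<delta> q a) w else selected \<delta> F (\<delta> q a) w)"

definition mu :: "('a \<Rightarrow> real) \<Rightarrow> 'a list set \<Rightarrow> real" where
  "mu p W = (\<Sum>\<^sub>\<infinity>w\<in>W. (\<Prod>i<length w. p (w ! i)))"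

definition words :: "'a set \<Rightarrow> nat \<Rightarrow> 'a list set" where
  "words Sig n = {w. length w = n \<and> set w \<subseteq> Sig}"

definition G_q :: "'s set \<Rightarrow> 'a set \<Rightarrow> ('s \<Rightarrow> 'a \<Rightarrow> 's) \<Rightarrow> 's set \<Rightarrow> ('a \<Rightarrow> real)
    \<Rightarrow> nat \<Rightarrow> real \<Rightarrow> real \<Rightarrow> 's \<Rightarrow> 'a list set" where
  "G_q Q Sig \<delta> F p n b \<epsilon> q = {w \<in> words Sig n.
     real (length (selected \<delta> F q w)) > b * real n \<and>
     (SUP a\<in>Sig. \<bar>real (count_list (selected \<delta> F q w) a) / real (length (selected \<delta> F q w)) - p a\<bar>) \<ge> \<epsilon>}"

definition G :: "'s set \<Rightarrow> 'a set \<Rightarrow> ('s \<Rightarrow> 'a \<Rightarrow> 's) \<Rightarrow> 's set \<Rightarrow> ('a \<Rightarrow> real)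
    \<Rightarrow> nat \<Rightarrow> real \<Rightarrow> real \<Rightarrow> 'a list set" where
  "G Q Sig \<delta> F p n b \<epsilon> = (\<Union>q\<in>Q. G_q Q Sig \<delta> F p n b \<epsilon> q)"

end

theory Submission
  imports Defs "HOL-Probability.Probability"
begin

text \<open>
  Under the Bernoulli measure, whether the automaton selects the i-th letter depends only on the
  letters before it. Hence for a centred letter function f with values in [-1, 1], the sum of f over
  the selected letters of a random word of length n has mean 0 and second moment at most n (the
  increments are orthogonal), and Chebyshev bounds the probability that it reaches t by n / t^2.

  A word in G_n has some letter a whose frequency among its more than bn selected letters deviates
  from p(a) by more than \<epsilon>/2. Fix a finite set S of letters carrying all but \<epsilon>/4 of the mass.
  If a lies in S, the centred indicator of a sums to at least \<epsilon>bn/4 in absolute value; otherwise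
  p(a) < \<epsilon>/4, so a is over-represented and the centred indicator of the complement of S sums to
  at least \<epsilon>bn/4. A union bound over the finitely many pairs of a start state and one of these
  indicators gives \<mu>(G_n) = O(1/n).
\<close>

lemma expectation_bind_pmf_bounded:
  fixes f :: "'b \<Rightarrow> real"
  assumes "\<And>x. x \<in> set_pmf (bind_pmf M N) \<Longrightarrow> \<bar>f x\<bar> \<le> B"
  shows "measure_pmf.expectation (bind_pmf M N) f =
    measure_pmf.expectation M (\<lambda>x. measure_pmf.expectation (N x) f)"
proof -
  \<comment> \<open>Bochner's bind rule wants a global bound, so cut f off outside the support.\<close>
  define g where "g x = (if x \<in> set_pmf (bind_pmf M N) then f x else 0)" for x
  have "0 \<le> B"
    using assms set_pmf_not_empty[of "bind_pmf M N"] by fastforce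
  then have g_bounded: "\<bar>g x\<bar> \<le> B" for x
    using assms[of x] by (auto simp: g_def)
  have "measure_pmf.expectation (bind_pmf M N) f = measure_pmf.expectation (bind_pmf M N) g"
    by (intro integral_cong_AE) (auto simp: g_def AE_measure_pmf_iff)
  also have "\<dots> = measure_pmf.expectation M (\<lambda>x. measure_pmf.expectation (N x) g)"
    unfolding measure_pmf_bind using g_bounded
    by (intro integral_bind[where K="count_space UNIV" and B'=1]) (auto simp: measure_subprob)
  also have "\<dots> = measure_pmf.expectation M (\<lambda>x. measure_pmf.expectation (N x) f)"
    by (intro integral_cong_AE) (auto simp: g_def AE_measure_pmf_iff intro!: integral_cong_AE)
  finally show ?thesis .
qed

lemma length_replicate_pmf: "w \<in> set_pmf (replicate_pmf n D) \<Longrightarrow> length w = n"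
  by (simp add: set_replicate_pmf)

lemma expectation_replicate_pmf_Suc:
  fixes g :: "'a list \<Rightarrow> real"
  assumes "\<And>w. length w = Suc n \<Longrightarrow> \<bar>g w\<bar> \<le> B"
  shows "measure_pmf.expectation (replicate_pmf (Suc n) D) g =
    measure_pmf.expectation D (\<lambda>a. measure_pmf.expectation (replicate_pmf n D) (\<lambda>w. g (a # w)))"
proof -
  have Suc_eq: "replicate_pmf (Suc n) D = bind_pmf D (\<lambda>a. map_pmf (Cons a) (replicate_pmf n D))"
    by (simp add: map_pmf_def)
  have "measure_pmf.expectation (replicate_pmf (Suc n) D) g =
    measure_pmf.expectation D (\<lambda>a. measure_pmf.expectation (map_pmf (Cons a) (replicate_pmf n D)) g)"
    unfolding Suc_eq using assms length_replicate_pmf[of _ "Suc n" D] Suc_eq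
    by (intro expectation_bind_pmf_bounded[where B=B]) metis
  then show ?thesis by simp
qed

lemma pmf_replicate_pmf:
  "pmf (replicate_pmf n D) w = (if length w = n then (\<Prod>i<n. pmf D (w ! i)) else 0)"
proof (induction n arbitrary: w)
  case 0
  then show ?case by (cases w) auto
next
  case (Suc n)
  show ?case
  proof (cases w)
    case Nil
    then show ?thesis by (auto simp: pmf_eq_0_set_pmf set_replicate_pmf)
  next
    case (Cons a v)
    have "pmf (map_pmf (Cons x) (replicate_pmf n D)) (a # v) = pmf (replicate_pmf n D) v * indicator {a} x" for x
      by (cases "x = a") (simp_all add: pmf_map_inj', subst pmf_map_outside, auto)
    then have "pmf (replicate_pmf (Suc n) D) w = pmf (replicate_pmf n D) v * pmf D a"
      by (simp add: Cons map_pmf_def[symmetric] pmf_bind measure_pmf_single)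
    then show ?thesis
      using Suc.IH[of v] by (simp add: Cons prod.lessThan_Suc_shift mult.commute del: prod.lessThan_Suc)
  qed
qed

lemma abs_sum_selected_le:
  fixes f :: "'a \<Rightarrow> real"
  assumes "\<And>a. \<bar>f a\<bar> \<le> 1"
  shows "\<bar>\<Sum>a\<leftarrow>selected \<delta> F q w. f a\<bar> \<le> real (length w)"
proof (induction w arbitrary: q)
  case (Cons a w)
  have "\<bar>\<Sum>x\<leftarrow>selected \<delta> F (\<delta> q a) w. f x\<bar> \<le> real (length w)"
    by (rule Cons.IH)
  then show ?case
    using assms[of a] by (auto simp: abs_le_iff)
qed simp

lemma integrable_power_sum_selected:
  fixes f :: "'a \<Rightarrow> real"
  assumes "\<And>a. \<bar>f a\<bar> \<le> 1"
  shows "integrable (measure_pmf (replicate_pmf n D)) (\<lambda>w. (\<Sum>a\<leftarrow>selected \<delta> F q w. f a) ^ k)"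
proof (rule measure_pmf.integrable_const_bound[where B="real n ^ k"])
  have "\<bar>\<Sum>a\<leftarrow>selected \<delta> F q w. f a\<bar> ^ k \<le> real n ^ k" if "w \<in> set_pmf (replicate_pmf n D)" for w
    using abs_sum_selected_le[where f=f, OF assms, of \<delta> F q w] length_replicate_pmf[OF that]
    by (intro power_mono) auto
  then show "AE w in measure_pmf (replicate_pmf n D). norm ((\<Sum>a\<leftarrow>selected \<delta> F q w. f a) ^ k) \<le> real n ^ k"
    by (simp add: AE_measure_pmf_iff power_abs)
qed simp

lemma expectation_sum_selected_eq_0:
  fixes f :: "'a \<Rightarrow> real"
  assumes "\<And>a. \<bar>f a\<bar> \<le> 1" and "measure_pmf.expectation D f = 0"
  shows "measure_pmf.expectation (replicate_pmf n D) (\<lambda>w. \<Sum>a\<leftarrow>selected \<delta> F q w. f a) = 0"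
proof (induction n arbitrary: q)
  case (Suc n)
  have step: "measure_pmf.expectation (replicate_pmf n D) (\<lambda>w. \<Sum>x\<leftarrow>selected \<delta> F q (a # w). f x)
      = (if q \<in> F then f a else 0)" for a
  proof -
    have "integrable (measure_pmf (replicate_pmf n D)) (\<lambda>w. \<Sum>x\<leftarrow>selected \<delta> F (\<delta> q a) w. f x)"
      using integrable_power_sum_selected[where f=f and k=1, OF assms(1)] by simp
    then show ?thesis
      using Suc[of "\<delta> q a"] by simp
  qed
  have "measure_pmf.expectation (replicate_pmf (Suc n) D) (\<lambda>w. \<Sum>a\<leftarrow>selected \<delta> F q w. f a) =
    measure_pmf.expectation D (\<lambda>a. measure_pmf.expectation (replicate_pmf n D)
      (\<lambda>w. \<Sum>x\<leftarrow>selected \<delta> F q (a # w). f x))"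
    using abs_sum_selected_le[where f=f, OF assms(1), of \<delta> F q]
    by (intro expectation_replicate_pmf_Suc[where B="real (Suc n)"]) metis
  also have "\<dots> = measure_pmf.expectation D (\<lambda>a. if q \<in> F then f a else 0)"
    by (simp only: step)
  also have "\<dots> = 0"
    using assms(2) by (cases "q \<in> F") simp_all
  finally show ?case .
qed simp

lemma expectation_square_sum_selected_le:
  fixes f :: "'a \<Rightarrow> real"
  assumes "\<And>a. \<bar>f a\<bar> \<le> 1" and "measure_pmf.expectation D f = 0"
  shows "measure_pmf.expectation (replicate_pmf n D) (\<lambda>w. (\<Sum>a\<leftarrow>selected \<delta> F q w. f a)\<^sup>2) \<le> n"
proof (induction n arbitrary: q)
  case (Suc n)
  define c where "c a = (if q \<in> F then f a else 0)" for a
  define V where "V r = measure_pmf.expectation (replicate_pmf n D) (\<lambda>w. (\<Sum>a\<leftarrow>selected \<delta> F r w. f a)\<^sup>2)" for r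
  have c_sq: "(c a)\<^sup>2 \<le> 1" for a
    using assms(1)[of a] by (simp add: c_def abs_square_le_1)
  have V_nonneg: "0 \<le> V r" for r
    by (simp add: V_def)
  have step: "measure_pmf.expectation (replicate_pmf n D) (\<lambda>w. (\<Sum>x\<leftarrow>selected \<delta> F q (a # w). f x)\<^sup>2)
      = (c a)\<^sup>2 + V (\<delta> q a)" for a
  proof -
    let ?M = "measure_pmf (replicate_pmf n D)" and ?S = "\<lambda>w. \<Sum>x\<leftarrow>selected \<delta> F (\<delta> q a) w. f x"
    have int_S: "integrable ?M ?S"
      using integrable_power_sum_selected[where f=f and k=1, OF assms(1)] by simp
    have int_S2: "integrable ?M (\<lambda>w. (?S w)\<^sup>2)"
      by (rule integrable_power_sum_selected[where f=f, OF assms(1)])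
    have "integral\<^sup>L ?M (\<lambda>w. (\<Sum>x\<leftarrow>selected \<delta> F q (a # w). f x)\<^sup>2)
        = integral\<^sup>L ?M (\<lambda>w. ((c a)\<^sup>2 + 2 * c a * ?S w) + (?S w)\<^sup>2)"
      by (rule arg_cong[where f="integral\<^sup>L ?M"]) (simp add: c_def power2_sum add_ac)
    also have "\<dots> = (c a)\<^sup>2 + 2 * c a * integral\<^sup>L ?M ?S + integral\<^sup>L ?M (\<lambda>w. (?S w)\<^sup>2)"
      using int_S int_S2 by simp
    \<comment> \<open>The cross term vanishes because the future sum is centred whatever the current letter.\<close>
    finally show ?thesis
      using expectation_sum_selected_eq_0[where f=f, OF assms, of n \<delta> F "\<delta> q a"]
      by (simp add: V_def)
  qed
  have "measure_pmf.expectation (replicate_pmf (Suc n) D) (\<lambda>w. (\<Sum>a\<leftarrow>selected \<delta> F q w. f a)\<^sup>2) =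
      measure_pmf.expectation D (\<lambda>a. measure_pmf.expectation (replicate_pmf n D)
        (\<lambda>w. (\<Sum>x\<leftarrow>selected \<delta> F q (a # w). f x)\<^sup>2))"
    using abs_sum_selected_le[where f=f, OF assms(1), of \<delta> F q]
    by (intro expectation_replicate_pmf_Suc[where B="real (Suc n) ^ 2"])
       (simp add: abs_le_square_iff[symmetric] del: of_nat_Suc; metis)
  also have "\<dots> = measure_pmf.expectation D (\<lambda>a. (c a)\<^sup>2 + V (\<delta> q a))"
    by (simp only: step)
  also have "\<dots> \<le> measure_pmf.expectation D (\<lambda>a. 1 + real n)"
    using c_sq V_nonneg Suc[unfolded V_def[symmetric]]
    by (intro integral_mono measure_pmf.integrable_const_bound[where B="1 + real n"])
       (auto simp: AE_measure_pmf_iff intro: add_mono)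
  finally show ?case by simp
qed simp

lemma prob_sum_selected_deviation_le:
  fixes f :: "'a \<Rightarrow> real"
  assumes "\<And>a. \<bar>f a\<bar> \<le> 1" and "measure_pmf.expectation D f = 0" and "0 < t"
  shows "measure_pmf.prob (replicate_pmf n D) {w. t \<le> \<bar>\<Sum>a\<leftarrow>selected \<delta> F q w. f a\<bar>} \<le> n / t\<^sup>2"
proof -
  let ?S = "\<lambda>w. \<Sum>a\<leftarrow>selected \<delta> F q w. f a"
  have "measure_pmf.prob (replicate_pmf n D) {w. t \<le> \<bar>?S w\<bar>} \<le> measure_pmf.variance (replicate_pmf n D) ?S / t\<^sup>2"
    using measure_pmf.Chebyshev_inequality[of ?S "replicate_pmf n D" t] assms(3)
      integrable_power_sum_selected[where f=f, OF assms(1), of n D \<delta> F q 2]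
      expectation_sum_selected_eq_0[where f=f, OF assms(1,2), of n \<delta> F q]
    by simp
  also have "\<dots> \<le> n / t\<^sup>2"
    using expectation_square_sum_selected_le[where f=f, OF assms(1,2), of n \<delta> F q]
      expectation_sum_selected_eq_0[where f=f, OF assms(1,2), of n \<delta> F q]
    by (simp add: divide_right_mono)
  finally show ?thesis .
qed

lemma pmf_of_has_sum:
  fixes p :: "'a \<Rightarrow> real"
  assumes "\<And>a. a \<in> Sig \<Longrightarrow> 0 \<le> p a" and "(p has_sum 1) Sig"
  obtains D :: "'a pmf" where "\<And>a. pmf D a = (if a \<in> Sig then p a else 0)"
proof
  let ?q = "\<lambda>a. if a \<in> Sig then p a else 0"
  have q_nonneg: "0 \<le> ?q a" for a
    using assms(1) by simp
  have has_sum: "(?q has_sum 1) UNIV"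
    using assms(2) by (rule has_sum_cong_neutral[THEN iffD1, rotated -1]) auto
  then have "Infinite_Set_Sum.abs_summable_on ?q UNIV"
    using q_nonneg abs_summable_equivalent has_sum_imp_summable by fastforce
  then have "(\<integral>\<^sup>+a. ennreal (?q a) \<partial>count_space UNIV) = ennreal (infsum ?q UNIV)"
    using q_nonneg by (simp add: nn_integral_conv_infsetsum infsetsum_infsum)
  also have "infsum ?q UNIV = 1"
    using has_sum by (rule infsumI)
  finally show "pmf (embed_pmf ?q) a = ?q a" for a
    using q_nonneg by (intro pmf_embed_pmf) simp_all
qed

lemma pmf_finite_set_complement_small:
  fixes D :: "'a pmf"
  assumes "0 < e"
  obtains S where "finite S" and "measure_pmf.prob D (- S) < e"
proof -
  have "pmf D summable_on UNIV"
    using pmf_abs_summable[of D UNIV] abs_summable_equivalent abs_summable_summable by blast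
  moreover have "infsum (pmf D) UNIV = 1"
    using measure_pmf_conv_infsetsum[of D UNIV] infsetsum_infsum[OF pmf_abs_summable[of D UNIV]] by simp
  ultimately have "(pmf D has_sum 1) UNIV"
    using has_sum_infsum by fastforce
  then have "\<forall>\<^sub>F S in finite_subsets_at_top UNIV. dist (sum (pmf D) S) 1 < e"
    using assms unfolding has_sum_def by (auto dest: tendstoD)
  then obtain S where "finite S" and "dist (sum (pmf D) S) 1 < e"
    unfolding eventually_finite_subsets_at_top by blast
  moreover have "measure_pmf.prob D (- S) = 1 - sum (pmf D) S"
    using \<open>finite S\<close> measure_pmf.prob_compl[of S D]
    by (simp add: measure_measure_pmf_finite Compl_eq_Diff_UNIV)
  ultimately show ?thesis
    using that by (auto simp: dist_real_def)
qed

lemma mu_eq_prob_replicate_pmf: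
  assumes "\<And>a. a \<in> Sig \<Longrightarrow> pmf D a = p a" and "X \<subseteq> words Sig n"
  shows "mu p X = measure_pmf.prob (replicate_pmf n D) X"
proof -
  have "(\<Prod>i<length w. p (w ! i)) = pmf (replicate_pmf n D) w" if "w \<in> X" for w
  proof -
    have "length w = n" and "set w \<subseteq> Sig"
      using assms(2) that by (auto simp: words_def)
    then show ?thesis
      using assms(1) by (auto simp: pmf_replicate_pmf intro!: prod.cong dest: nth_mem)
  qed
  then have "mu p X = infsum (pmf (replicate_pmf n D)) X"
    unfolding mu_def by (rule infsum_cong)
  also have "\<dots> = measure_pmf.prob (replicate_pmf n D) X"
    by (simp add: measure_pmf_conv_infsetsum infsetsum_infsum pmf_abs_summable)
  finally show ?thesis .
qed

lemma sum_list_indicator_minus_const: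
  "(\<Sum>x\<leftarrow>xs. indicator B x - c) = real (length (filter (\<lambda>x. x \<in> B) xs)) - c * real (length xs)"
  by (induction xs) (auto simp: algebra_simps)

lemma expectation_indicator_minus_prob:
  "measure_pmf.expectation D (\<lambda>a. indicator B a - measure_pmf.prob D B) = 0"
proof -
  have "integrable (measure_pmf D) (indicator B :: 'a \<Rightarrow> real)"
    by (rule measure_pmf.integrable_const_bound[where B=1]) (simp_all add: indicator_def)
  then show ?thesis
    by simp
qed

lemma letter_frequency_deviation:
  fixes D :: "'a pmf" and s :: "'a list"
  assumes "s \<noteq> []" and "measure_pmf.prob D (- S) < e / 4"
    and "e / 2 < \<bar>count_list s a / length s - pmf D a\<bar>"
  shows "\<exists>B \<in> (\<lambda>x. {x}) ` S \<union> {- S}.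
           e / 4 * length s \<le> \<bar>\<Sum>x\<leftarrow>s. indicator B x - measure_pmf.prob D B\<bar>"
proof -
  define L where "L = real (length s)"
  define k where "k = real (count_list s a)"
  have "0 < L"
    using assms(1) by (simp add: L_def)
  have "0 < e"
    using assms(2) measure_nonneg[of "measure_pmf D" "- S"] by linarith
  have "k - pmf D a * L = L * (k / L - pmf D a)"
    using \<open>0 < L\<close> by (simp add: field_simps)
  then have k_dev: "\<bar>k - pmf D a * L\<bar> = L * \<bar>k / L - pmf D a\<bar>"
    using \<open>0 < L\<close> by (simp add: abs_mult)
  show ?thesis
  proof (cases "a \<in> S")
    case True
    have "length (filter (\<lambda>x. x \<in> {a}) s) = count_list s a"
      by (induction s) auto
    then have "(\<Sum>x\<leftarrow>s. indicator {a} x - measure_pmf.prob D {a}) = k - pmf D a * L"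
      by (simp only: sum_list_indicator_minus_const measure_pmf_single k_def L_def)
    moreover have "e / 4 * L \<le> L * \<bar>k / L - pmf D a\<bar>"
      using assms(3) \<open>0 < L\<close> \<open>0 < e\<close> by (simp add: k_def L_def)
    ultimately have "e / 4 * L \<le> \<bar>\<Sum>x\<leftarrow>s. indicator {a} x - measure_pmf.prob D {a}\<bar>"
      using k_dev by simp
    then show ?thesis
      using True by (intro bexI[of _ "{a}"]) (simp_all add: L_def)
  next
    case False
    \<comment> \<open>A letter outside S is rare, so its frequency can only deviate upwards, dragging the
      frequency of the block - S along.\<close>
    have count_le: "count_list s a \<le> length (filter (\<lambda>x. x \<in> - S) s)"
      using False by (induction s) auto
    have "pmf D a \<le> measure_pmf.prob D (- S)"
      using False by (simp add: measure_pmf_single[symmetric] measure_pmf.finite_measure_mono)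
    moreover have "0 \<le> k / L"
      using \<open>0 < L\<close> by (simp add: k_def)
    moreover have "e / 2 < \<bar>k / L - pmf D a\<bar>"
      using assms(3) by (simp add: k_def L_def)
    ultimately have "e / 2 < k / L - pmf D a"
      using assms(2) by (auto simp: abs_real_def split: if_splits)
    then have "e / 2 * L < (k / L - pmf D a) * L"
      using \<open>0 < L\<close> by (rule mult_strict_right_mono)
    also have "\<dots> \<le> k"
      using \<open>0 < L\<close> pmf_nonneg[of D a] by (simp add: left_diff_distrib)
    finally have "e / 2 * L < k" .
    moreover have "k \<le> real (length (filter (\<lambda>x. x \<in> - S) s))"
      using count_le by (simp add: k_def)
    moreover have "measure_pmf.prob D (- S) * L \<le> e / 4 * L"
      using assms(2) \<open>0 < L\<close> by simp
    ultimately have "e / 4 * L \<le> (\<Sum>x\<leftarrow>s. indicator (- S) x - measure_pmf.prob D (- S))"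
      by (simp add: sum_list_indicator_minus_const L_def)
    then show ?thesis
      by (intro bexI[of _ "- S"]) (simp_all add: L_def)
  qed
qed

lemma G_subset_selected_deviations:
  assumes "Sig \<noteq> {}" and "\<And>a. a \<in> Sig \<Longrightarrow> pmf D a = p a"
    and "measure_pmf.prob D (- S) < e / 4" and "0 \<le> b"
  shows "G Q Sig \<delta> F p n b e \<subseteq> (\<Union>(q, B) \<in> Q \<times> ((\<lambda>x. {x}) ` S \<union> {- S}).
           {w. e / 4 * (b * n) \<le> \<bar>\<Sum>x\<leftarrow>selected \<delta> F q w. indicator B x - measure_pmf.prob D B\<bar>})"
proof
  fix w assume "w \<in> G Q Sig \<delta> F p n b e"
  then obtain q where "q \<in> Q" and "w \<in> G_q Q Sig \<delta> F p n b e q"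
    unfolding G_def by blast
  define s where "s = selected \<delta> F q w"
  define dev where "dev a = \<bar>real (count_list s a) / real (length s) - p a\<bar>" for a
  have long: "b * n < length s" and "e \<le> (SUP a\<in>Sig. dev a)"
    using \<open>w \<in> G_q _ _ _ _ _ _ _ _ _\<close> by (auto simp: G_q_def s_def dev_def)
  have "0 < e"
    using assms(3) measure_nonneg[of "measure_pmf D" "- S"] by linarith
  have "0 \<le> b * n"
    using assms(4) by simp
  then have "s \<noteq> []"
    using long by auto
  have "dev a \<le> 2" if "a \<in> Sig" for a
  proof -
    have "real (count_list s a) / real (length s) \<le> 1"
      using count_le_length[of s a] \<open>s \<noteq> []\<close> by simp
    moreover have "0 \<le> real (count_list s a) / real (length s)"
      by simp
    moreover have "0 \<le> p a" and "p a \<le> 1"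
      using assms(2)[OF that] pmf_le_1[of D a] pmf_nonneg[of D a] by auto
    ultimately show ?thesis
      unfolding dev_def by (intro abs_leI) linarith+
  qed
  then have "bdd_above (dev ` Sig)"
    by (rule bdd_aboveI2)
  moreover have "e / 2 < (SUP a\<in>Sig. dev a)"
    using \<open>e \<le> _\<close> \<open>0 < e\<close> by linarith
  ultimately obtain a where "a \<in> Sig" and "e / 2 < dev a"
    using less_cSUP_iff[OF assms(1)] by blast
  then have "e / 2 < \<bar>count_list s a / length s - pmf D a\<bar>"
    using assms(2) by (simp add: dev_def)
  then obtain B where "B \<in> (\<lambda>x. {x}) ` S \<union> {- S}"
      and "e / 4 * length s \<le> \<bar>\<Sum>x\<leftarrow>s. indicator B x - measure_pmf.prob D B\<bar>"
    using letter_frequency_deviation[OF \<open>s \<noteq> []\<close> assms(3)] by blast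
  moreover have "e / 4 * (b * n) \<le> e / 4 * length s"
    using long \<open>0 < e\<close> by simp
  ultimately have "e / 4 * (b * n) \<le> \<bar>\<Sum>x\<leftarrow>selected \<delta> F q w. indicator B x - measure_pmf.prob D B\<bar>"
    unfolding s_def by linarith
  then show "w \<in> (\<Union>(q, B) \<in> Q \<times> ((\<lambda>x. {x}) ` S \<union> {- S}).
           {w. e / 4 * (b * n) \<le> \<bar>\<Sum>x\<leftarrow>selected \<delta> F q w. indicator B x - measure_pmf.prob D B\<bar>})"
    using \<open>q \<in> Q\<close> \<open>B \<in> _\<close> by (intro UN_I[of "(q, B)"]) simp_all
qed

lemma G_subset_words: "G Q Sig \<delta> F p n b e \<subseteq> words Sig n"
  by (auto simp: G_def G_q_def)

lemma mu_G_le: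
  assumes "Sig \<noteq> {}" and "finite Q" and "\<And>a. a \<in> Sig \<Longrightarrow> pmf D a = p a"
    and "finite S" and "measure_pmf.prob D (- S) < e / 4" and "0 < b" and "0 < n"
  shows "mu p (G Q Sig \<delta> F p n b e) \<le> 16 * card Q * (card S + 1) / ((e * b)\<^sup>2 * n)"
proof -
  define I where "I = Q \<times> ((\<lambda>x. {x}) ` S \<union> {- S})"
  define t where "t = e / 4 * (b * n)"
  define A where "A = (\<lambda>(q, B). {w. t \<le> \<bar>\<Sum>x\<leftarrow>selected \<delta> F q w. indicator B x - measure_pmf.prob D B\<bar>})"
  let ?W = "replicate_pmf n D"
  have "0 < e"
    using assms(5) measure_nonneg[of "measure_pmf D" "- S"] by linarith
  then have "0 < t"
    using assms(6,7) by (simp add: t_def)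
  have "finite I"
    using assms(2,4) by (simp add: I_def)
  have "card ((\<lambda>x. {x}) ` S \<union> {- S}) \<le> card S + 1"
    using assms(4) card_image_le[OF assms(4), of "\<lambda>x. {x}"] by (simp add: card_insert_if)
  then have "card I \<le> card Q * (card S + 1)"
    unfolding I_def card_cartesian_product by (rule mult_le_mono2)
  have "mu p (G Q Sig \<delta> F p n b e) = measure_pmf.prob ?W (G Q Sig \<delta> F p n b e)"
    using assms(3) G_subset_words by (rule mu_eq_prob_replicate_pmf)
  also have "\<dots> \<le> measure_pmf.prob ?W (\<Union>i\<in>I. A i)"
    using G_subset_selected_deviations[OF assms(1,3,5) less_imp_le[OF assms(6)]]
    by (intro measure_pmf.finite_measure_mono) (simp_all add: I_def A_def t_def)
  also have "\<dots> \<le> (\<Sum>i\<in>I. measure_pmf.prob ?W (A i))"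
    using \<open>finite I\<close> by (intro measure_pmf.finite_measure_subadditive_finite) auto
  also have "\<dots> \<le> (\<Sum>i\<in>I. n / t\<^sup>2)"
  proof (rule sum_mono)
    fix i assume "i \<in> I"
    obtain q B where i: "i = (q, B)"
      by fastforce
    have "\<bar>indicator B a - measure_pmf.prob D B\<bar> \<le> (1::real)" for a
      by (simp add: indicator_def)
    then show "measure_pmf.prob ?W (A i) \<le> n / t\<^sup>2"
      unfolding A_def i using \<open>0 < t\<close>
      by (auto intro: prob_sum_selected_deviation_le expectation_indicator_minus_prob)
  qed
  also have "\<dots> = card I * (16 / ((e * b)\<^sup>2 * n))"
    using assms(7) by (simp add: t_def power2_eq_square field_simps)
  also have "\<dots> \<le> card Q * (card S + 1) * (16 / ((e * b)\<^sup>2 * n))"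
    using \<open>card I \<le> _\<close> by (intro mult_right_mono) (simp_all flip: of_nat_mult)
  finally show ?thesis
    by (simp add: algebra_simps)
qed

theorem corollary5p6:
  fixes Sig :: "'a set" and p :: "'a \<Rightarrow> real"
    and Q :: "'s set" and \<delta> :: "'s \<Rightarrow> 'a \<Rightarrow> 's" and qs :: 's and F :: "'s set"
    and b \<epsilon> :: real
  assumes "Sig \<noteq> {}" and "countable Sig"
    and "\<forall>a\<in>Sig. p a > 0 \<and> p a \<le> 1" and "(p has_sum 1) Sig"
    and "is_dfa Q Sig \<delta> qs F" and "strongly_connected Q Sig \<delta>"
    and "0 < b" and "b \<le> 1" and "\<epsilon> > 0"
  shows "(\<lambda>n. mu p (G Q Sig \<delta> F p n b \<epsilon>)) \<longlonglongrightarrow> 0"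
proof -
  obtain D :: "'a pmf" where D: "\<And>a. a \<in> Sig \<Longrightarrow> pmf D a = p a"
    using pmf_of_has_sum[of Sig p] assms(3,4) by (metis less_imp_le)
  obtain S where "finite S" and S: "measure_pmf.prob D (- S) < \<epsilon> / 4"
    using pmf_finite_set_complement_small[of "\<epsilon> / 4" D] assms(9) by auto
  define K where "K = 16 * card Q * (card S + 1) / (\<epsilon> * b)\<^sup>2"
  have "finite Q"
    using assms(5) by (simp add: is_dfa_def)
  have "mu p (G Q Sig \<delta> F p n b \<epsilon>) \<le> K / n" if "0 < n" for n
    using mu_G_le[OF assms(1) \<open>finite Q\<close> D \<open>finite S\<close> S assms(7) that] by (simp add: K_def)
  moreover have "0 \<le> mu p (G Q Sig \<delta> F p n b \<epsilon>)" for n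
    using mu_eq_prob_replicate_pmf[of Sig D p, OF D G_subset_words[of Q Sig \<delta> F p n b \<epsilon>]] by simp
  ultimately show ?thesis
    by (intro tendsto_sandwich[OF _ _ tendsto_const lim_const_over_n[of K]])
       (auto simp: eventually_sequentially intro!: exI[of _ 1])
qed

end
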